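(* Let $\mathcal{F}$ be a vector space over a field $K$, let $T \colon \mathcal{F} \to \mathcal{F}$ be a surjective linear map, let $\mathcal{B} \leq \mathcal{F}^*$ be a finite-dimensional subspace of the dual space, and let $\mathcal{E} \leq \mathcal{F}$ be a subspace. Let $G \colon \mathcal{F} \to \mathcal{F}$ be any linear right inverse of $T$ (i.e. $TG = 1$). Then $$T(\mathcal{B}^{\perp})^{\perp} = G^*\bigl(\mathcal{B} \cap (\operatorname{Ker} T)^{\perp}\bigr).$$ Moreover, $\dim T(\mathcal{B}^{\perp})^{\perp} = \dim \mathcal{E}'$ for every subspace $\mathcal{E}' \leq \mathcal{F}$ with $\mathcal{F} = T(\mathcal{B}^{\perp}) \dotplus \mathcal{E}'$ (direct sum).
   Context: $\mathcal{F}^*$ denotes the algebraic dual of $\mathcal{F}$. For $U \leq \mathcal{F}$, $U^{\perp} = \{\beta \in \mathcal{F}^* : \beta(u) = 0 \text{ for all } u \in U\}$; for $\mathcal{B} \leq \mathcal{F}^*$, $\mathcal{B}^{\perp} = \{v \in \mathcal{F} : \beta(v) = 0 \text{ for all } \beta \in \mathcal{B}\}$. For a linear map $S\colon \mathcal{F} \to \mathcal{F}$, the transpose $S^* \colon \mathcal{F}^* \to \mathcal{F}^*$ is $\gamma \mapsto \gamma \circ S$. The triple $(T, \mathcal{B}, \mathcal{E})$ is called a generalized boundary problem. *)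

theory Defs
  imports Complex_Main "HOL-Library.Function_Algebras"
begin

definition dual_scale :: "'k::field \<Rightarrow> ('v \<Rightarrow> 'k) \<Rightarrow> ('v \<Rightarrow> 'k)" where
  "dual_scale c f = (\<lambda>x. c * f x)"

definition algdual :: "('k::field \<Rightarrow> 'v::ab_group_add \<Rightarrow> 'v) \<Rightarrow> ('v \<Rightarrow> 'k) set" where
  "algdual scale = {f. Vector_Spaces.linear scale (*) f}"

definition annih :: "('k::field \<Rightarrow> 'v::ab_group_add \<Rightarrow> 'v) \<Rightarrow> 'v set \<Rightarrow> ('v \<Rightarrow> 'k) set" where
  "annih scale U = {\<beta> \<in> algdual scale. \<forall>u\<in>U. \<beta> u = 0}"

definition preannih :: "('v \<Rightarrow> 'k::zero) set \<Rightarrow> 'v set" where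
  "preannih Bs = {v. \<forall>\<beta>\<in>Bs. \<beta> v = 0}"

definition fin_dim :: "('k::field \<Rightarrow> 'b::ab_group_add \<Rightarrow> 'b) \<Rightarrow> 'b set \<Rightarrow> bool" where
  "fin_dim s V \<longleftrightarrow> (\<exists>S. finite S \<and> module.span s S = V)"

end

theory Submission
  imports Defs
begin

text \<open>If \<open>\<beta>\<close> annihilates \<open>T(B\<^sup>\<perp>)\<close>, then \<open>\<beta> \<circ> T\<close> vanishes on \<open>B\<^sup>\<perp>\<close> and on \<open>Ker T\<close>; a functional
  vanishing on the common kernel of the finite-dimensional \<open>B\<close> lies in \<open>B\<close>, and \<open>TG = 1\<close> gives
  \<open>\<beta> = (\<beta> \<circ> T) \<circ> G\<close>. Conversely, for \<open>\<gamma> \<in> B\<close> vanishing on \<open>Ker T\<close>, \<open>\<gamma> \<circ> G\<close> kills \<open>T v\<close> for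
  \<open>v \<in> B\<^sup>\<perp>\<close> because \<open>G (T v) - v \<in> Ker T\<close>. Hence the annihilator of \<open>W = T(B\<^sup>\<perp>)\<close> lies in a finite
  span. Given a complement \<open>E'\<close> of \<open>W\<close>, composing the coordinate functionals of a basis of \<open>E'\<close>
  with the projection onto \<open>E'\<close> along \<open>W\<close> yields a basis of that annihilator indexed by the
  basis of \<open>E'\<close>; finiteness of the annihilator forces the basis of \<open>E'\<close> to be finite.\<close>

lemma vector_space_mult: "vector_space ((*) :: 'k::field \<Rightarrow> 'k \<Rightarrow> 'k)"
  by unfold_locales (auto simp: algebra_simps)

lemma vector_space_dual_scale: "vector_space (dual_scale :: 'k::field \<Rightarrow> ('v \<Rightarrow> 'k) \<Rightarrow> ('v \<Rightarrow> 'k))"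
  by unfold_locales (auto simp: dual_scale_def fun_eq_iff algebra_simps)

lemma dual_scale_apply: "dual_scale c f x = c * f x"
  by (simp add: dual_scale_def)

lemma sum_fun_apply: "(\<Sum>i\<in>A. f i) x = (\<Sum>i\<in>A. f i x)"
  by (induction A rule: infinite_finite_induct) auto

lemma linear_precompose:
  "Vector_Spaces.linear dual_scale dual_scale (\<lambda>\<gamma> :: 'w \<Rightarrow> 'k::field. \<gamma> \<circ> (G :: 'v \<Rightarrow> 'w))"
  by (auto simp: Vector_Spaces.linear_iff fun_eq_iff vector_space_dual_scale dual_scale_apply)

lemma linear_apply_zero: "Vector_Spaces.linear s1 s2 f \<Longrightarrow> f 0 = 0"
  by (metis Vector_Spaces.linear_def module_hom.zero)

lemma linear_apply_diff: "Vector_Spaces.linear s1 s2 f \<Longrightarrow> f (x - y) = f x - f y"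
  by (metis Vector_Spaces.linear_def module_hom.diff)

lemma linear_apply_add: "Vector_Spaces.linear s1 s2 f \<Longrightarrow> f (x + y) = f x + f y"
  by (simp add: Vector_Spaces.linear_iff)

lemma linear_apply_sum: "Vector_Spaces.linear s1 s2 f \<Longrightarrow> f (sum g A) = (\<Sum>a\<in>A. f (g a))"
  by (metis Vector_Spaces.linear_def module_hom.sum)

lemma linear_apply_scale: "Vector_Spaces.linear s1 s2 f \<Longrightarrow> f (s1 c x) = s2 c (f x)"
  by (simp add: Vector_Spaces.linear_iff)

lemma preannih_dual_span:
  "preannih (module.span dual_scale S) = preannih (S :: ('v \<Rightarrow> 'k::field) set)"
proof -
  interpret dual: vector_space "dual_scale :: 'k \<Rightarrow> ('v \<Rightarrow> 'k) \<Rightarrow> _"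
    by (rule vector_space_dual_scale)
  have "\<beta> v = 0" if "\<beta> \<in> dual.span S" "v \<in> preannih S" for \<beta> v
    using that(1)
  proof (induction rule: dual.span_induct)
    case base
    show ?case by (rule dual.subspaceI) (auto simp: dual_scale_apply)
  next
    case (step \<beta>)
    then show ?case using that(2) by (simp add: preannih_def)
  qed
  then show ?thesis
    using dual.span_base by (fastforce simp: preannih_def)
qed

lemma independent_biorthogonal:
  fixes \<phi> :: "'v \<Rightarrow> 'v \<Rightarrow> 'k::field"
  assumes biorth: "\<And>j k. j \<in> J \<Longrightarrow> k \<in> J \<Longrightarrow> \<phi> j k = (if k = j then 1 else 0)"
  shows "inj_on \<phi> J" and "module.independent dual_scale (\<phi> ` J)"
proof -
  interpret dual: vector_space "dual_scale :: 'k \<Rightarrow> ('v \<Rightarrow> 'k) \<Rightarrow> _"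
    by (rule vector_space_dual_scale)
  show inj: "inj_on \<phi> J"
  proof (rule inj_onI)
    fix j k assume "j \<in> J" "k \<in> J" "\<phi> j = \<phi> k"
    then show "j = k" using biorth[of j j] biorth[of k j] by (auto split: if_splits)
  qed
  show "dual.independent (\<phi> ` J)"
    unfolding dual.independent_explicit_finite_subsets
  proof (intro allI impI ballI)
    fix U u \<beta>
    assume U: "U \<subseteq> \<phi> ` J" "finite U" and zero: "(\<Sum>\<gamma>\<in>U. dual_scale (u \<gamma>) \<gamma>) = 0"
      and "\<beta> \<in> U"
    then obtain j where j: "j \<in> J" "\<beta> = \<phi> j" by auto
    have \<delta>: "\<gamma> j = (if \<gamma> = \<beta> then 1 else 0)" if "\<gamma> \<in> U" for \<gamma>
      using that U j biorth inj by (auto dest: inj_onD)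
    have "(\<Sum>\<gamma>\<in>U. dual_scale (u \<gamma>) \<gamma>) j = (\<Sum>\<gamma>\<in>U. if \<gamma> = \<beta> then u \<gamma> else 0)"
      unfolding sum_fun_apply by (rule sum.cong) (simp_all add: \<delta> dual_scale_apply)
    also have "\<dots> = u \<beta>" using U \<open>\<beta> \<in> U\<close> by (simp add: sum.delta)
    finally show "u \<beta> = 0" using zero by simp
  qed
qed

context vector_space
begin

interpretation dual: vector_space "dual_scale :: 'a \<Rightarrow> ('b \<Rightarrow> 'a) \<Rightarrow> ('b \<Rightarrow> 'a)"
  by (rule vector_space_dual_scale)

lemma subspace_preannih: "B \<subseteq> algdual scale \<Longrightarrow> subspace (preannih B)"
  by (rule subspaceI)
     (auto simp: preannih_def algdual_def Vector_Spaces.linear_iff linear_apply_zero dest!: subsetD)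

text \<open>Induction step: if \<open>b\<close> does not vanish on the common kernel of \<open>S\<close>, pick \<open>w'\<close> there with
  \<open>b w' = 1\<close>; then \<open>f - f(w') b\<close> vanishes on the common kernel of \<open>S\<close>.\<close>

lemma in_dual_span_if_vanishes_on_preannih:
  assumes "finite S" "S \<subseteq> algdual scale" "f \<in> algdual scale" "\<forall>v\<in>preannih S. f v = 0"
  shows "f \<in> module.span dual_scale S"
  using assms
proof (induction S arbitrary: f rule: finite_induct)
  case empty
  then have "f = 0" by (auto simp: preannih_def)
  then show ?case using dual.span_zero by metis
next
  case (insert b S)
  have f_lin: "Vector_Spaces.linear scale (*) f" and b_lin: "Vector_Spaces.linear scale (*) b"
    and S_lin: "\<And>\<beta>. \<beta> \<in> S \<Longrightarrow> Vector_Spaces.linear scale (*) \<beta>"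
    using insert.prems by (auto simp: algdual_def)
  have span_mono: "dual.span S \<subseteq> dual.span (insert b S)" by (rule dual.span_mono) auto
  show ?case
  proof (cases "\<forall>v\<in>preannih S. b v = 0")
    case True
    then have "\<forall>v\<in>preannih S. f v = 0"
      using insert.prems(3) by (auto simp: preannih_def)
    then show ?thesis using insert.IH insert.prems span_mono by auto
  next
    case False
    then obtain w where w: "w \<in> preannih S" "b w \<noteq> 0" by auto
    define w' where "w' = inverse (b w) *s w"
    have w': "b w' = 1" "w' \<in> preannih S"
      using w by (auto simp: w'_def preannih_def linear_apply_scale[OF b_lin] linear_apply_scale[OF S_lin])
    define f' where "f' = f - dual_scale (f w') b"
    have "f' \<in> algdual scale"
      using f_lin b_lin vector_space_mult
      by (auto simp: algdual_def f'_def Vector_Spaces.linear_iff algebra_simps dual_scale_apply)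
    moreover have "\<forall>v\<in>preannih S. f' v = 0"
    proof
      fix v assume v: "v \<in> preannih S"
      have "v - b v *s w' \<in> preannih (insert b S)"
        using v w' by (auto simp: preannih_def linear_apply_diff[OF b_lin] linear_apply_scale[OF b_lin]
            linear_apply_diff[OF S_lin] linear_apply_scale[OF S_lin])
      then have "f (v - b v *s w') = 0" using insert.prems(3) by blast
      then show "f' v = 0"
        by (simp add: f'_def dual_scale_apply linear_apply_diff[OF f_lin] linear_apply_scale[OF f_lin])
    qed
    ultimately have "f' \<in> dual.span (insert b S)"
      using insert.IH insert.prems span_mono by blast
    moreover have "dual_scale (f w') b \<in> dual.span (insert b S)"
      by (intro dual.span_scale dual.span_base) simp
    ultimately have "f' + dual_scale (f w') b \<in> dual.span (insert b S)" by (rule dual.span_add)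
    then show ?thesis by (simp add: f'_def)
  qed
qed

lemma annih_image_preannih:
  assumes T_lin: "Vector_Spaces.linear scale scale T"
    and G_lin: "Vector_Spaces.linear scale scale G" and G_rinv: "\<And>x. T (G x) = x"
    and B_dual: "B \<subseteq> algdual scale" and B_fin: "fin_dim dual_scale B"
  shows "annih scale (T ` preannih B) = (\<lambda>\<gamma>. \<gamma> \<circ> G) ` (B \<inter> annih scale {v. T v = 0})"
proof
  show "annih scale (T ` preannih B) \<subseteq> (\<lambda>\<gamma>. \<gamma> \<circ> G) ` (B \<inter> annih scale {v. T v = 0})"
  proof
    fix \<beta> assume \<beta>: "\<beta> \<in> annih scale (T ` preannih B)"
    then have \<beta>_lin: "Vector_Spaces.linear scale (*) \<beta>" by (simp add: annih_def algdual_def)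
    have \<beta>T: "\<beta> \<circ> T \<in> algdual scale"
      using Vector_Spaces.linear_compose[OF T_lin \<beta>_lin] by (simp add: algdual_def)
    obtain S where S: "finite S" "dual.span S = B"
      using B_fin by (auto simp: fin_dim_def)
    have "\<beta> \<circ> T \<in> dual.span S"
    proof (rule in_dual_span_if_vanishes_on_preannih)
      show "S \<subseteq> algdual scale" using S(2) B_dual dual.span_superset by blast
      show "\<forall>v\<in>preannih S. (\<beta> \<circ> T) v = 0"
        using \<beta> S(2) preannih_dual_span[of S] by (auto simp: annih_def)
    qed (use S(1) \<beta>T in auto)
    moreover have "\<beta> \<circ> T \<in> annih scale {v. T v = 0}"
      using \<beta>T \<beta>_lin by (auto simp: annih_def linear_apply_zero)
    moreover have "\<beta> = \<beta> \<circ> T \<circ> G" using G_rinv by (simp add: fun_eq_iff)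
    ultimately show "\<beta> \<in> (\<lambda>\<gamma>. \<gamma> \<circ> G) ` (B \<inter> annih scale {v. T v = 0})"
      using S(2) by blast
  qed
  show "(\<lambda>\<gamma>. \<gamma> \<circ> G) ` (B \<inter> annih scale {v. T v = 0}) \<subseteq> annih scale (T ` preannih B)"
  proof clarify
    fix \<gamma> assume \<gamma>: "\<gamma> \<in> B" "\<gamma> \<in> annih scale {v. T v = 0}"
    have \<gamma>_lin: "Vector_Spaces.linear scale (*) \<gamma>" using \<gamma>(1) B_dual by (auto simp: algdual_def)
    have "\<gamma> (G (T v)) = 0" if "v \<in> preannih B" for v
    proof -
      have "T (G (T v) - v) = 0" using G_rinv by (simp add: linear_apply_diff[OF T_lin])
      then have "\<gamma> (G (T v) - v) = 0" using \<gamma>(2) by (auto simp: annih_def)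
      moreover have "\<gamma> v = 0" using that \<gamma>(1) by (auto simp: preannih_def)
      ultimately show ?thesis using linear_apply_diff[OF \<gamma>_lin] by simp
    qed
    then show "\<gamma> \<circ> G \<in> annih scale (T ` preannih B)"
      using Vector_Spaces.linear_compose[OF G_lin \<gamma>_lin] by (auto simp: annih_def algdual_def)
  qed
qed

lemma complement_projection_exists:
  assumes W: "subspace W" and E: "subspace E"
    and sum_UNIV: "{x + y |x y. x \<in> W \<and> y \<in> E} = UNIV" and cap: "W \<inter> E = {0}"
  obtains P where "Vector_Spaces.linear scale scale P"
    and "\<And>x. P x \<in> E" and "\<And>x. x - P x \<in> W"
    and "\<And>w. w \<in> W \<Longrightarrow> P w = 0" and "\<And>e. e \<in> E \<Longrightarrow> P e = e"
proof -
  have unique: "e1 = e2" if "e1 \<in> E" "x - e1 \<in> W" "e2 \<in> E" "x - e2 \<in> W" for x e1 e2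
  proof -
    have "(x - e1) - (x - e2) \<in> W" "e2 - e1 \<in> E" using that W E subspace_diff by blast+
    then have "e2 - e1 \<in> W \<inter> E" by simp
    then show ?thesis using cap by auto
  qed
  have "\<exists>e. e \<in> E \<and> x - e \<in> W" for x
  proof -
    obtain w e where "x = w + e" "w \<in> W" "e \<in> E" using sum_UNIV by blast
    then show ?thesis by auto
  qed
  then obtain P where P: "\<And>x. P x \<in> E" "\<And>x. x - P x \<in> W" by metis
  have P_eq: "P x = e" if "e \<in> E" "x - e \<in> W" for x e
    using unique P that by blast
  have "Vector_Spaces.linear scale scale P"
  unfolding Vector_Spaces.linear_iff
  proof (intro conjI allI)
    show "P (x + y) = P x + P y" for x y
    proof (rule P_eq)
      show "P x + P y \<in> E" using P E subspace_add by blast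
      have "(x - P x) + (y - P y) \<in> W" using P W subspace_add by blast
      then show "x + y - (P x + P y) \<in> W" by (simp add: algebra_simps)
    qed
    show "P (c *s x) = c *s P x" for c x
    proof (rule P_eq)
      show "c *s P x \<in> E" using P E subspace_scale by blast
      have "c *s (x - P x) \<in> W" using P W subspace_scale by blast
      then show "c *s x - c *s P x \<in> W" by (simp add: scale_right_diff_distrib)
    qed
  qed (rule vector_space_axioms)+
  moreover have "P w = 0" if "w \<in> W" for w
    using that E W by (intro P_eq) (auto simp: subspace_0)
  moreover have "P e = e" if "e \<in> E" for e
    using that W by (intro P_eq) (auto simp: subspace_0)
  ultimately show ?thesis using that P by blast
qed

lemma dim_annih_eq_dim_complement:
  assumes W: "subspace W" and E: "subspace E"
    and sum_UNIV: "{x + y |x y. x \<in> W \<and> y \<in> E} = UNIV" and cap: "W \<inter> E = {0}"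
    and S: "finite S" "annih scale W \<subseteq> module.span dual_scale S"
  shows "fin_dim scale E \<and> vector_space.dim dual_scale (annih scale W) = dim E"
proof -
  obtain P where P_lin: "Vector_Spaces.linear scale scale P"
    and P: "\<And>x. P x \<in> E" "\<And>x. x - P x \<in> W" "\<And>w. w \<in> W \<Longrightarrow> P w = 0" "\<And>e. e \<in> E \<Longrightarrow> P e = e"
    by (rule complement_projection_exists[OF W E sum_UNIV cap]) (rule that)
  obtain J where J: "J \<subseteq> E" "independent J" "E \<subseteq> span J" and J_card: "card J = dim E"
    by (rule basis_exists)
  have P_span: "P x \<in> span J" for x using P(1) J(3) by blast
  define \<phi> where "\<phi> j x = representation J (P x) j" for j x
  have \<phi>_annih: "\<phi> j \<in> annih scale W" for j
  proof -
    have "Vector_Spaces.linear scale (*) (\<phi> j)"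
      unfolding Vector_Spaces.linear_iff
    proof (intro conjI allI)
      show "\<phi> j (x + y) = \<phi> j x + \<phi> j y" for x y
        by (simp add: \<phi>_def linear_apply_add[OF P_lin] representation_add[OF J(2) P_span P_span])
      show "\<phi> j (c *s x) = c * \<phi> j x" for c x
        by (simp add: \<phi>_def linear_apply_scale[OF P_lin] representation_scale[OF J(2) P_span])
    qed (rule vector_space_axioms vector_space_mult)+
    then show ?thesis
      by (simp add: annih_def algdual_def \<phi>_def P(3) representation_zero)
  qed
  have biorth: "\<phi> j k = (if k = j then 1 else 0)" if "j \<in> J" "k \<in> J" for j k
    using that J by (auto simp: \<phi>_def P(4) representation_basis)
  note \<phi>_inj = independent_biorthogonal(1)[of J \<phi>, OF biorth]
    and \<phi>_indep = independent_biorthogonal(2)[of J \<phi>, OF biorth]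
  have "\<phi> ` J \<subseteq> annih scale W" using \<phi>_annih by blast
  then have "finite (\<phi> ` J)"
    using dual.independent_span_bound[OF S(1) \<phi>_indep] S(2) by (meson order_trans)
  then have J_fin: "finite J" using \<phi>_inj finite_imageD by blast
  have "annih scale W \<subseteq> dual.span (\<phi> ` J)"
  proof
    fix \<beta> assume \<beta>: "\<beta> \<in> annih scale W"
    then have \<beta>_lin: "Vector_Spaces.linear scale (*) \<beta>" by (simp add: annih_def algdual_def)
    have "\<beta> x = (\<Sum>j\<in>J. dual_scale (\<beta> j) (\<phi> j)) x" for x
    proof -
      have "\<beta> x = \<beta> (x - P x) + \<beta> (P x)" by (simp add: linear_apply_diff[OF \<beta>_lin])
      also have "\<beta> (x - P x) = 0" using \<beta> P(2) by (simp add: annih_def)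
      also have "P x = (\<Sum>j\<in>J. representation J (P x) j *s j)"
        using sum_representation_eq[OF J(2) P_span J_fin order.refl] by simp
      also have "\<beta> \<dots> = (\<Sum>j\<in>J. representation J (P x) j * \<beta> j)"
        by (simp add: linear_apply_sum[OF \<beta>_lin] linear_apply_scale[OF \<beta>_lin])
      finally show ?thesis by (simp add: sum_fun_apply dual_scale_apply \<phi>_def ac_simps)
    qed
    then have "\<beta> = (\<Sum>j\<in>J. dual_scale (\<beta> j) (\<phi> j))" by (rule ext)
    also have "\<dots> \<in> dual.span (\<phi> ` J)"
      by (intro dual.span_sum dual.span_scale dual.span_base) auto
    finally show "\<beta> \<in> dual.span (\<phi> ` J)" .
  qed
  then have "card (\<phi> ` J) = dual.dim (annih scale W)"
    using \<phi>_annih by (intro dual.basis_card_eq_dim[OF _ _ \<phi>_indep]) auto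
  then have "dual.dim (annih scale W) = dim E"
    using J_card card_image[OF \<phi>_inj] by simp
  moreover have "fin_dim scale E"
    unfolding fin_dim_def using J_fin span_subspace[OF J(1) J(3) E] by blast
  ultimately show ?thesis by simp
qed

end

theorem proposition1:
  fixes scale :: "'k::field \<Rightarrow> 'v::ab_group_add \<Rightarrow> 'v"
    and T G :: "'v \<Rightarrow> 'v"
    and B :: "('v \<Rightarrow> 'k) set"
    and E :: "'v set"
  assumes VS: "vector_space scale"
    and T_lin: "Vector_Spaces.linear scale scale T" and T_surj: "surj T"
    and B_dual: "B \<subseteq> algdual scale"
    and B_sub: "module.subspace dual_scale B"
    and B_fin: "fin_dim dual_scale B"
    and E_sub: "module.subspace scale E"
    and G_lin: "Vector_Spaces.linear scale scale G"
    and G_rinv: "\<forall>x. T (G x) = x"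
  shows "annih scale (T ` preannih B)
           = (\<lambda>\<gamma>. \<gamma> \<circ> G) ` (B \<inter> annih scale {v. T v = 0})
         \<and> (\<forall>E'. module.subspace scale E'
              \<and> {x + y |x y. x \<in> T ` preannih B \<and> y \<in> E'} = UNIV
              \<and> T ` preannih B \<inter> E' = {0}
          \<longrightarrow> fin_dim scale E'
              \<and> vector_space.dim dual_scale (annih scale (T ` preannih B))
                  = vector_space.dim scale E')"
proof -
  interpret V: vector_space scale by (rule VS)
  interpret dual: vector_space "dual_scale :: 'k \<Rightarrow> ('v \<Rightarrow> 'k) \<Rightarrow> _"
    by (rule vector_space_dual_scale)
  interpret T: Vector_Spaces.linear scale scale T by (rule T_lin)
  interpret C: Vector_Spaces.linear dual_scale dual_scale "\<lambda>\<gamma> :: 'v \<Rightarrow> 'k. \<gamma> \<circ> G"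
    by (rule linear_precompose)
  have annih_eq: "annih scale (T ` preannih B) = (\<lambda>\<gamma>. \<gamma> \<circ> G) ` (B \<inter> annih scale {v. T v = 0})"
    using V.annih_image_preannih[OF T_lin G_lin _ B_dual B_fin] G_rinv by blast
  obtain S where S: "finite S" "dual.span S = B"
    using B_fin by (auto simp: fin_dim_def)
  have "annih scale (T ` preannih B) \<subseteq> dual.span ((\<lambda>\<gamma>. \<gamma> \<circ> G) ` S)"
    unfolding annih_eq C.span_image S(2) by blast
  moreover have "V.subspace (T ` preannih B)"
    by (rule T.subspace_image[OF V.subspace_preannih[OF B_dual]])
  ultimately show ?thesis
    using annih_eq V.dim_annih_eq_dim_complement[of "T ` preannih B"] S(1) by blast
qed

end
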